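(* Let $0\le l<k\le n$, $\Lambda=(\lambda_1,\dots,\lambda_n)\in\Gamma_k^+$, and for $1\le i\le n$ set $$F^{ii}=F^*\big\{\sigma_l(\Lambda)\sigma_{k-1}(\Lambda_i)-\sigma_k(\Lambda)\sigma_{l-1}(\Lambda_i)\big\},\qquad F^*=\frac1{k-l}\Big(\frac{\sigma_k(\Lambda)}{\sigma_l(\Lambda)}\Big)^{\frac1{k-l}-1}\frac1{\sigma_l(\Lambda)^2}.$$ If $\lambda_i\le\lambda_j$ then $F^{ii}\ge F^{jj}$. If moreover $(n-k+1)(n-l+1)>2(n+1)$ and $\lambda_1>0$, then there is a constant $c(n,k,l)>0$ depending only on $n,k,l$ such that $\sum_{i=1}^nF^{ii}\ge(2+c(n,k,l))F^{11}$.
   Context: $\sigma_j$ is the $j$-th elementary symmetric function, with $\sigma_0\equiv1$, $\sigma_{-1}\equiv0$. $\Gamma_k^+=\{\Lambda\in\mathbb R^n:\sigma_j(\Lambda)>0 \text{ for } 1\le j\le k\}$. $\Lambda_i\in\mathbb R^{n-1}$ denotes $\Lambda$ with its $i$-th component deleted. *)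

theory Defs
  imports Complex_Main
begin

text \<open>Elementary symmetric function of order j of the components of a vector
  indexed by the finite set A; j is an integer so that sigma_{-1} = 0.
  sigma_0 = 1 (product over the empty set).\<close>
definition esym :: "int \<Rightarrow> nat set \<Rightarrow> (nat \<Rightarrow> real) \<Rightarrow> real" where
  "esym j A lam = (if j < 0 then 0
     else (\<Sum>S\<in>{S. S \<subseteq> A \<and> card S = nat j}. \<Prod>i\<in>S. lam i))"

definition sigma :: "nat \<Rightarrow> int \<Rightarrow> (nat \<Rightarrow> real) \<Rightarrow> real" where
  "sigma n j lam = esym j {1..n} lam"

definition sigma_del :: "nat \<Rightarrow> int \<Rightarrow> (nat \<Rightarrow> real) \<Rightarrow> nat \<Rightarrow> real" where
  "sigma_del n j lam i = esym j ({1..n} - {i}) lam"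

definition Gamma_plus :: "nat \<Rightarrow> nat \<Rightarrow> (nat \<Rightarrow> real) set" where
  "Gamma_plus n k = {lam. \<forall>j\<in>{1..k}. sigma n (int j) lam > 0}"

definition Fstar :: "nat \<Rightarrow> nat \<Rightarrow> nat \<Rightarrow> (nat \<Rightarrow> real) \<Rightarrow> real" where
  "Fstar n k l lam = (1 / real (k - l)) *
     (sigma n (int k) lam / sigma n (int l) lam) powr (1 / real (k - l) - 1) *
     (1 / (sigma n (int l) lam)^2)"

definition Fii :: "nat \<Rightarrow> nat \<Rightarrow> nat \<Rightarrow> (nat \<Rightarrow> real) \<Rightarrow> nat \<Rightarrow> real" where
  "Fii n k l lam i = Fstar n k l lam *
     (sigma n (int l) lam * sigma_del n (int k - 1) lam i
      - sigma n (int k) lam * sigma_del n (int l - 1) lam i)"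

end

theory Submission
  imports Defs "HOL-Computational_Algebra.Polynomial"
begin

text \<open>
  Everything is expressed through elementary symmetric functions of the vector with one or two
  entries deleted, using sigma_j(Lambda) = sigma_j(Lambda_x) + lambda_x sigma_(j-1)(Lambda_x).
  The analytic input is Newton's inequality, proved by induction on the number N of variables:
  prod_i (t + lambda_i) has only real roots, hence so has its derivative (Rolle), and the roots of
  the derivative form a vector with N - 1 entries and the same normalised means
  sigma_j / (N choose j) for j < N; the top index j = N - 1 is reduced to j = 1 by inverting all
  entries. Newton's inequalities give the Newton-Maclaurin bounds on
  sigma_j sigma_(i-1) / (sigma_i sigma_(j-1)) and show that Lambda_x lies in Gamma_(k-1)
  whenever Lambda lies in Gamma_k.

  For the monotonicity, F^ii - F^jj is F^* (lambda_j - lambda_i) times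
  sigma_l sigma_(k-2)(Lambda_ij) - sigma_k sigma_(l-2)(Lambda_ij), which is nonnegative.
  For the trace bound, (sum_i F^ii - (2 + 1/n) F^11) / F^* is a quadratic polynomial in lambda_1
  with coefficients in sigma(Lambda_1); the Newton-Maclaurin bounds make all three coefficients
  nonnegative, the constant one because (n - k)(n - l) >= n + 1, which follows from
  (n - k + 1)(n - l + 1) > 2(n + 1).
\<close>

lemma esym_negative: "j < 0 \<Longrightarrow> esym j A lam = 0"
  by (simp add: esym_def)

lemma esym_0:
  assumes "finite A"
  shows "esym 0 A lam = 1"
proof -
  have "{S. S \<subseteq> A \<and> card S = 0} = {{}}"
    using assms by (auto dest: finite_subset)
  then show ?thesis by (simp add: esym_def)
qed

lemma esym_above_card:
  assumes "finite A" "int (card A) < j"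
  shows "esym j A lam = 0"
proof -
  have "card S \<noteq> nat j" if "S \<subseteq> A" for S
    using card_mono[OF assms(1) that] assms(2) by linarith
  then have none: "{S. S \<subseteq> A \<and> card S = nat j} = {}" by blast
  show ?thesis unfolding esym_def none by simp
qed

lemma esym_empty: "esym j {} lam = (if j = 0 then 1 else 0)"
proof -
  consider "j < 0" | "j = 0" | "0 < j" by linarith
  then show ?thesis by cases (simp_all add: esym_negative esym_0 esym_above_card)
qed

lemma subsets_card_Suc_insert:
  assumes "finite A" "x \<notin> A"
  shows "{S. S \<subseteq> insert x A \<and> card S = Suc m}
       = {S. S \<subseteq> A \<and> card S = Suc m} \<union> insert x ` {S. S \<subseteq> A \<and> card S = m}"
proof (intro set_eqI iffI)
  fix S assume S: "S \<in> {S. S \<subseteq> insert x A \<and> card S = Suc m}"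
  show "S \<in> {S. S \<subseteq> A \<and> card S = Suc m} \<union> insert x ` {S. S \<subseteq> A \<and> card S = m}"
  proof (cases "x \<in> S")
    case True
    then have "S = insert x (S - {x})" "S - {x} \<subseteq> A" "card (S - {x}) = m"
      using S by auto
    then show ?thesis by blast
  qed (use S in auto)
next
  fix S assume "S \<in> {S. S \<subseteq> A \<and> card S = Suc m} \<union> insert x ` {S. S \<subseteq> A \<and> card S = m}"
  moreover have "card (insert x T) = Suc (card T)" if "T \<subseteq> A" for T
    using that assms rev_finite_subset[OF assms(1) that] by (subst card_insert_disjoint) auto
  ultimately show "S \<in> {S. S \<subseteq> insert x A \<and> card S = Suc m}" by auto
qed

lemma esym_insert:
  assumes "finite A" "x \<notin> A"
  shows "esym j (insert x A) lam = esym j A lam + lam x * esym (j - 1) A lam"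
proof (cases "j \<ge> 1")
  case False
  then show ?thesis
    using assms by (cases "j = 0") (simp_all add: esym_negative esym_0)
next
  case True
  define m where "m = nat (j - 1)"
  have j: "nat j = Suc m" "nat (j - 1) = m" "\<not> j < 0" "\<not> j - 1 < 0"
    using True by (simp_all add: m_def)
  let ?L = "{S. S \<subseteq> A \<and> card S = Suc m}" and ?R = "{S. S \<subseteq> A \<and> card S = m}"
  have fin: "finite ?L" "finite (insert x ` ?R)"
    using assms(1) by (auto intro: finite_subset[of _ "Pow A"])
  have disj: "?L \<inter> insert x ` ?R = {}" using assms(2) by auto
  have inj: "inj_on (insert x) ?R"
    using assms(2) by (intro inj_onI) (metis Diff_insert_absorb mem_Collect_eq subsetD)
  have prod: "(\<Prod>i\<in>insert x T. lam i) = lam x * (\<Prod>i\<in>T. lam i)" if "T \<in> ?R" for T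
    using that assms by (auto intro: prod.insert rev_finite_subset)
  have "esym j (insert x A) lam = (\<Sum>S\<in>?L. \<Prod>i\<in>S. lam i) + (\<Sum>S\<in>insert x ` ?R. \<Prod>i\<in>S. lam i)"
    unfolding esym_def by (simp add: j subsets_card_Suc_insert[OF assms] sum.union_disjoint[OF fin disj])
  also have "(\<Sum>S\<in>insert x ` ?R. \<Prod>i\<in>S. lam i) = lam x * (\<Sum>T\<in>?R. \<Prod>i\<in>T. lam i)"
    by (simp add: sum.reindex[OF inj] prod sum_distrib_left)
  finally show ?thesis using True by (simp add: esym_def j)
qed

lemma esym_remove:
  assumes "finite A" "x \<in> A"
  shows "esym j A lam = esym j (A - {x}) lam + lam x * esym (j - 1) (A - {x}) lam"
  using esym_insert[of "A - {x}" x j lam] assms by (simp add: insert_absorb)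

lemma sum_esym_remove:
  "finite A \<Longrightarrow> (\<Sum>i\<in>A. esym j (A - {i}) lam) = (real (card A) - of_int j) * esym j A lam"
proof (induction A arbitrary: j rule: finite_induct)
  case (insert x A)
  have "(\<Sum>i\<in>A. esym j (insert x A - {i}) lam)
      = (\<Sum>i\<in>A. esym j (A - {i}) lam + lam x * esym (j - 1) (A - {i}) lam)"
    using insert by (intro sum.cong) (auto simp: insert_Diff_if esym_insert)
  with insert show ?case
    by (simp add: sum.distrib sum_distrib_left[symmetric] esym_insert algebra_simps
        insert.IH[of j] insert.IH[of "j - 1"])
qed (simp add: esym_empty)

lemma esym_inverse:
  assumes "finite A" "\<forall>i\<in>A. lam i \<noteq> 0"
  shows "esym j A (\<lambda>i. 1 / lam i) * esym (int (card A)) A lam = esym (int (card A) - j) A lam"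
  using assms
proof (induction A arbitrary: j rule: finite_induct)
  case (insert x A)
  let ?inv = "\<lambda>i. 1 / lam i"
  have IH: "esym j A ?inv * esym (int (card A)) A lam = esym (int (card A) - j) A lam" for j
    using insert by simp
  have "esym j (insert x A) ?inv * esym (int (card (insert x A))) (insert x A) lam
     = (esym j A ?inv + ?inv x * esym (j - 1) A ?inv) * (lam x * esym (int (card A)) A lam)"
    using insert by (simp add: esym_insert esym_above_card add.commute)
  also have "\<dots> = lam x * (esym j A ?inv * esym (int (card A)) A lam)
      + esym (j - 1) A ?inv * esym (int (card A)) A lam"
    using insert.prems by (simp add: field_simps)
  also have "\<dots> = lam x * esym (int (card A) - j) A lam + esym (int (card A) - (j - 1)) A lam"
    by (simp only: IH)
  also have "\<dots> = esym (int (card (insert x A)) - j) (insert x A) lam"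
    using insert by (simp add: esym_insert algebra_simps)
  finally show ?case .
qed (simp add: esym_empty)

definition esym_poly :: "nat set \<Rightarrow> (nat \<Rightarrow> real) \<Rightarrow> real poly" where
  "esym_poly A lam = (\<Prod>i\<in>A. [:lam i, 1:])"

lemma coeff_esym_poly:
  "finite A \<Longrightarrow> coeff (esym_poly A lam) j = esym (int (card A) - int j) A lam"
proof (induction A arbitrary: j rule: finite_induct)
  case (insert x A)
  have "esym_poly (insert x A) lam = smult (lam x) (esym_poly A lam) + pCons 0 (esym_poly A lam)"
    using insert by (simp add: esym_poly_def)
  with insert show ?case
    by (cases j) (simp_all add: esym_insert esym_above_card algebra_simps)
qed (simp add: esym_poly_def esym_empty)

lemma degree_esym_poly: "finite A \<Longrightarrow> degree (esym_poly A lam) = card A"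
  by (intro antisym degree_le le_degree) (simp_all add: coeff_esym_poly esym_negative esym_0)

lemma esym_poly_nonzero: "finite A \<Longrightarrow> esym_poly A lam \<noteq> 0"
  using coeff_esym_poly[of A lam "card A"] by (auto simp: esym_0)

lemma size_proots_esym_poly: "finite A \<Longrightarrow> size (proots (esym_poly A lam)) = card A"
  by (simp add: esym_poly_def proots_prod)

lemma sum_order_le_size_proots:
  fixes q :: "'a::idom poly"
  assumes "q \<noteq> 0" "finite S"
  shows "(\<Sum>x\<in>S. order x q) \<le> size (proots q)"
proof -
  have "(\<Sum>x\<in>S. order x q) = (\<Sum>x\<in>S. count (proots q) x)"
    using assms by simp
  also have "\<dots> = (\<Sum>x\<in>S \<inter> set_mset (proots q). count (proots q) x)"
    using assms by (intro sum.mono_neutral_right) (auto intro!: order_root[THEN iffD2])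
  also have "\<dots> \<le> (\<Sum>x\<in>set_mset (proots q). count (proots q) x)"
    by (intro sum_mono2) auto
  finally show ?thesis by (simp add: size_multiset_overloaded_eq)
qed

lemma exists_points_between:
  fixes R :: "'a::linorder set"
  assumes "finite R" "\<And>a b. a \<in> R \<Longrightarrow> b \<in> R \<Longrightarrow> a < b \<Longrightarrow> \<exists>z. a < z \<and> z < b \<and> P z"
  shows "\<exists>U. finite U \<and> card R \<le> card U + 1 \<and> R \<inter> U = {} \<and> (\<forall>z\<in>U. P z)"
proof -
  \<comment> \<open>every chosen point lies below a point of R, so the point chosen above max R is new\<close>
  have "\<exists>U. finite U \<and> card R \<le> card U + 1 \<and> R \<inter> U = {}
      \<and> (\<forall>z\<in>U. P z \<and> (\<exists>r\<in>R. z < r))"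
    using assms
  proof (induction R rule: finite_linorder_max_induct)
    case (insert b R)
    then obtain U where U: "finite U" "card R \<le> card U + 1" "R \<inter> U = {}"
      "\<forall>z\<in>U. P z \<and> (\<exists>r\<in>R. z < r)"
      by blast
    show ?case
    proof (cases "R = {}")
      case False
      define a where "a = Max R"
      have a: "a \<in> R" "\<forall>r\<in>R. r \<le> a" using False insert.hyps(1) by (simp_all add: a_def)
      with insert.hyps(2) insert.prems obtain z where z: "a < z" "z < b" "P z" by blast
      have "u < a" if "u \<in> U" for u
        using U(4) a(2) that by (meson order.strict_trans2)
      then have "z \<notin> U" "b \<notin> U" using z by (meson less_asym order.strict_trans)+
      moreover have "z \<notin> insert b R" using z a(2) by (auto simp: not_le[symmetric])
      moreover have "b \<notin> R" using insert.hyps(2) by blast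
      ultimately show ?thesis
        using U z insert.hyps(1) by (intro exI[of _ "insert z U"]) auto
    qed (intro exI[of _ "{}"], simp)
  qed simp
  then show ?thesis by blast
qed

lemma size_proots_pderiv:
  fixes p :: "real poly"
  assumes "p \<noteq> 0" "size (proots p) = degree p"
  shows "size (proots (pderiv p)) = degree (pderiv p)"
proof (cases "pderiv p = 0")
  case False
  define R where "R = {x. poly p x = 0}"
  have finR: "finite R" unfolding R_def using assms(1) by (rule poly_roots_finite)
  have "\<exists>z. a < z \<and> z < b \<and> poly (pderiv p) z = 0" if "a \<in> R" "b \<in> R" "a < b" for a b
  proof -
    have "continuous_on {a..b} (poly p)" by (intro continuous_intros)
    then have "\<exists>z. a < z \<and> z < b \<and> DERIV (poly p) z :> 0"
      by (intro Rolle) (use that in \<open>auto simp: R_def real_differentiable_def intro: poly_DERIV\<close>)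
    then obtain z where z: "a < z" "z < b" "DERIV (poly p) z :> 0" by blast
    have "poly (pderiv p) z = 0" using DERIV_unique[OF z(3) poly_DERIV] by simp
    with z show ?thesis by blast
  qed
  then obtain U where U: "finite U" "card R \<le> card U + 1" "R \<inter> U = {}"
    "\<forall>z\<in>U. poly (pderiv p) z = 0"
    using exists_points_between[OF finR, of "\<lambda>z. poly (pderiv p) z = 0"] by blast
  have "order z (pderiv p) \<noteq> 0" if "z \<in> U" for z
    using U(4) that False order_root[of "pderiv p" z] by blast
  then have "card U \<le> (\<Sum>z\<in>U. order z (pderiv p))"
    using sum_mono[of U "\<lambda>_. 1::nat" "\<lambda>z. order z (pderiv p)"] by (simp add: Suc_le_eq)
  moreover have "degree p = (\<Sum>x\<in>R. order x p)"
    using assms by (simp add: R_def size_multiset_overloaded_eq)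
  moreover have "(\<Sum>x\<in>R. order x p) = (\<Sum>x\<in>R. order x (pderiv p)) + card R"
    using assms(1) by (simp add: R_def order_pderiv sum_Suc)
  moreover have "(\<Sum>x\<in>R. order x (pderiv p)) + (\<Sum>x\<in>U. order x (pderiv p)) \<le> size (proots (pderiv p))"
    using sum_order_le_size_proots[OF False, of "R \<union> U"] finR U(1)
      sum.union_disjoint[OF finR U(1,3), of "\<lambda>x. order x (pderiv p)"]
    by simp
  moreover have "size (proots (pderiv p)) \<le> degree p - 1"
    using size_proots_le[of "pderiv p"] by (simp add: degree_pderiv)
  ultimately show ?thesis
    using U(2) unfolding degree_pderiv by linarith
qed simp

lemma real_rooted_eq_esym_poly:
  fixes p :: "real poly"
  assumes "p \<noteq> 0" "size (proots p) = degree p"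
  shows "\<exists>mu. p = smult (lead_coeff p) (esym_poly {..<degree p} mu)"
  using assms
proof (induction "degree p" arbitrary: p)
  case 0
  then show ?case by (auto simp: esym_poly_def elim!: degree_eq_zeroE)
next
  case (Suc d)
  then have "proots p \<noteq> {#}" by auto
  then obtain a where "a \<in># proots p" by (rule multiset_nonemptyE)
  then have "poly p a = 0" using Suc.prems(1) by simp
  then obtain r where r: "p = [:-a, 1:] * r" by (auto simp: poly_eq_0_iff_dvd elim: dvdE)
  with Suc.prems have "r \<noteq> 0" by auto
  have "degree p = degree r + 1"
    unfolding r using \<open>r \<noteq> 0\<close> by (subst degree_mult_eq) auto
  moreover have "proots p = add_mset a (proots r)"
    unfolding r using \<open>r \<noteq> 0\<close> proots_linear_factor[of "-a"] by (subst proots_mult) auto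
  ultimately have "degree r = d" "size (proots r) = d"
    using Suc.hyps(2) Suc.prems(2) by simp_all
  with Suc.hyps(1) \<open>r \<noteq> 0\<close> obtain mu where mu: "r = smult (lead_coeff r) (esym_poly {..<d} mu)"
    by blast
  have lc: "lead_coeff p = lead_coeff r"
    unfolding r lead_coeff_mult by simp
  have "esym_poly {..<Suc d} (mu(d := -a)) = [:-a, 1:] * esym_poly {..<d} (mu(d := -a))"
    unfolding esym_poly_def lessThan_Suc by (subst prod.insert) auto
  also have "esym_poly {..<d} (mu(d := -a)) = esym_poly {..<d} mu"
    unfolding esym_poly_def by (intro prod.cong) auto
  finally have "esym_poly {..<Suc d} (mu(d := -a)) = [:-a, 1:] * esym_poly {..<d} mu" .
  moreover have "p = [:-a, 1:] * smult (lead_coeff r) (esym_poly {..<d} mu)"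
    using r arg_cong[OF mu, of "times [:-a, 1:]"] by (rule trans)
  ultimately have "p = smult (lead_coeff p) (esym_poly {..<Suc d} (mu(d := -a)))"
    unfolding lc by (simp only: mult_smult_right)
  with Suc.hyps(2) show ?case by auto
qed

lemma pderiv_esym_poly_eq:
  assumes "finite A" "A \<noteq> {}"
  shows "\<exists>mu. pderiv (esym_poly A lam) = smult (real (card A)) (esym_poly {..<card A - 1} mu)"
proof -
  define q where "q = pderiv (esym_poly A lam)"
  have N: "card A \<ge> 1" using assms by (simp add: Suc_le_eq card_gt_0_iff)
  have deg: "degree q = card A - 1"
    using assms by (simp add: q_def degree_pderiv degree_esym_poly)
  have "lead_coeff q = coeff q (card A - 1)" by (simp only: deg)
  also have "\<dots> = real (card A) * coeff (esym_poly A lam) (card A)"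
    using N by (simp add: q_def coeff_pderiv)
  also have "\<dots> = real (card A)" using assms(1) by (simp add: coeff_esym_poly esym_0)
  finally have "lead_coeff q = real (card A)" .
  moreover have "q \<noteq> 0" using N assms by (simp add: q_def pderiv_eq_0_iff degree_esym_poly)
  moreover have "size (proots q) = degree q"
    unfolding q_def using assms
    by (intro size_proots_pderiv) (simp_all add: esym_poly_nonzero size_proots_esym_poly degree_esym_poly)
  ultimately show ?thesis
    using real_rooted_eq_esym_poly deg unfolding q_def by metis
qed

lemma ex_esym_pderiv:
  assumes "finite A" "A \<noteq> {}"
  defines "N \<equiv> card A"
  shows "\<exists>mu. \<forall>j. real N * esym j {..<N - 1} mu = (real N - of_int j) * esym j A lam"
proof -
  obtain mu where q: "pderiv (esym_poly A lam) = smult (real N) (esym_poly {..<N - 1} mu)"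
    using pderiv_esym_poly_eq[OF assms(1,2)] unfolding N_def by blast
  have N: "N \<ge> 1" using assms by (simp add: N_def Suc_le_eq card_gt_0_iff)
  have "real N * esym j {..<N - 1} mu = (real N - of_int j) * esym j A lam" for j
  proof -
    consider "j < 0" | "int N - 1 < j" | "0 \<le> j" "j \<le> int N - 1" by linarith
    then show ?thesis
    proof cases
      case 2
      then have "j = int N \<or> int (card A) < j" using N_def by linarith
      with 2 N assms(1) show ?thesis by (auto simp: esym_above_card)
    next
      case 3
      define n where "n = nat (int N - 1 - j)"
      have n: "int (card {..<N - 1}) - int n = j" "int N - int (Suc n) = j"
        "real (Suc n) = real N - of_int j"
        using 3 N by (simp_all add: n_def)
      have "coeff (pderiv (esym_poly A lam)) n = real N * esym j {..<N - 1} mu"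
        unfolding q coeff_smult coeff_esym_poly[OF finite_lessThan] n(1) ..
      moreover have "coeff (pderiv (esym_poly A lam)) n = real (Suc n) * esym (int N - int (Suc n)) A lam"
        using assms(1) by (simp add: coeff_pderiv coeff_esym_poly N_def)
      ultimately show ?thesis unfolding n(2,3) by linarith
    qed (simp add: esym_negative)
  qed
  then show ?thesis by blast
qed

text \<open>Newton's inequality E_(m-1) E_(m+1) <= E_m^2 for E_m = esym m A lam / (card A choose m),
  cleared of denominators.\<close>
definition newton_ineq :: "nat set \<Rightarrow> (nat \<Rightarrow> real) \<Rightarrow> int \<Rightarrow> bool" where
  "newton_ineq A lam m \<longleftrightarrow>
     (real (card A) - of_int m + 1) * (of_int m + 1) * esym (m - 1) A lam * esym (m + 1) A lam
       \<le> of_int m * (real (card A) - of_int m) * (esym m A lam)\<^sup>2"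

lemma newton_ineq_nonpos: "m \<le> 0 \<Longrightarrow> newton_ineq A lam m"
  by (cases "m = 0") (simp_all add: newton_ineq_def esym_negative)

lemma newton_ineq_above_card:
  assumes "finite A" "int (card A) \<le> m"
  shows "newton_ineq A lam m"
  using assms by (cases "m = int (card A)") (simp_all add: newton_ineq_def esym_above_card)

lemma newton_ineq_card_2:
  assumes "card A = 2"
  shows "newton_ineq A lam 1"
proof -
  obtain a b where A: "A = {a, b}" "a \<noteq> b" using assms by (meson card_2_iff)
  have "esym 0 A lam = 1" "esym 1 A lam = lam a + lam b" "esym 2 A lam = lam a * lam b"
    using A by (simp_all add: esym_insert esym_empty)
  moreover have "4 * (lam a * lam b) \<le> (lam a + lam b)\<^sup>2"
    using sum_squares_ge_zero[of "lam a - lam b" 0] by (simp add: power2_eq_square algebra_simps)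
  ultimately show ?thesis using assms by (simp add: newton_ineq_def)
qed

lemma newton_ineq_zero_entry:
  assumes "finite A" "x \<in> A" "lam x = 0"
  shows "newton_ineq A lam (int (card A) - 1)"
proof -
  have "card A \<ge> 1" using assms(1,2) by (auto simp: Suc_le_eq card_gt_0_iff)
  then have "esym (int (card A)) (A - {x}) lam = 0"
    using assms by (intro esym_above_card) (simp_all add: card_Diff_singleton)
  then have "esym (int (card A)) A lam = 0"
    using esym_remove[OF assms(1,2)] assms(3) by simp
  with \<open>card A \<ge> 1\<close> show ?thesis by (simp add: newton_ineq_def)
qed

lemma newton_ineq_inverse:
  assumes "finite A" "\<forall>i\<in>A. lam i \<noteq> 0" "newton_ineq A (\<lambda>i. 1 / lam i) m"
  shows "newton_ineq A lam (int (card A) - m)"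
proof -
  define N where "N = real (card A)"
  define P where "P = esym (int (card A)) A lam"
  let ?e = "\<lambda>j. esym j A (\<lambda>i. 1 / lam i)"
  have e: "esym (int (card A) - j) A lam = ?e j * P" for j
    using esym_inverse[OF assms(1,2)] by (simp add: P_def)
  have "P\<^sup>2 * ((N - of_int m + 1) * (of_int m + 1) * ?e (m - 1) * ?e (m + 1))
      \<le> P\<^sup>2 * (of_int m * (N - of_int m) * (?e m)\<^sup>2)"
    using assms(3) by (intro mult_left_mono) (simp_all add: newton_ineq_def N_def)
  then have "(of_int m + 1) * (N - of_int m + 1) * (?e (m + 1) * P) * (?e (m - 1) * P)
      \<le> (N - of_int m) * of_int m * (?e m * P)\<^sup>2"
    by (simp add: power2_eq_square algebra_simps)
  then show ?thesis
    unfolding newton_ineq_def diff_diff_eq2 diff_add_eq_diff_diff_swap e[symmetric]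
    by (simp add: N_def algebra_simps)
qed

lemma newton_ineq_pderiv:
  assumes "finite A" "1 \<le> m" "m \<le> int (card A) - 2"
    and "\<And>mu. newton_ineq {..<card A - 1} mu m"
  shows "newton_ineq A lam m"
proof -
  define N where "N = card A"
  have "A \<noteq> {}" using assms(2,3) by auto
  then obtain mu where rel: "\<And>j. real N * esym j {..<N - 1} mu = (real N - of_int j) * esym j A lam"
    using ex_esym_pderiv[OF assms(1)] unfolding N_def by blast
  define X where "X = real N - of_int m"
  have X: "X \<ge> 2" using assms(3) by (simp add: X_def N_def)
  define c where "c j = esym j {..<N - 1} mu" for j
  define s where "s j = esym j A lam" for j
  have cs: "real N * c (m - 1) = (X + 1) * s (m - 1)" "real N * c m = X * s m"
    "real N * c (m + 1) = (X - 1) * s (m + 1)"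
    using rel[of "m - 1"] rel[of m] rel[of "m + 1"] by (simp_all add: c_def s_def X_def algebra_simps)
  have "real (card {..<N - 1}) = real N - 1" using assms(2,3) by (simp add: N_def of_nat_diff)
  then have "(real N - 1 - of_int m + 1) * (of_int m + 1) * c (m - 1) * c (m + 1)
      \<le> of_int m * (real N - 1 - of_int m) * (c m)\<^sup>2"
    using assms(4)[of mu] unfolding newton_ineq_def c_def N_def by simp
  then have "X * (of_int m + 1) * c (m - 1) * c (m + 1) \<le> of_int m * (X - 1) * (c m)\<^sup>2"
    by (simp add: X_def algebra_simps)
  then have "real N ^ 2 * (X * (of_int m + 1) * c (m - 1) * c (m + 1))
      \<le> real N ^ 2 * (of_int m * (X - 1) * (c m)\<^sup>2)"
    by (rule mult_left_mono) simp
  then have "X * (of_int m + 1) * (real N * c (m - 1)) * (real N * c (m + 1))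
      \<le> of_int m * (X - 1) * (real N * c m)\<^sup>2"
    by (simp add: power2_eq_square mult_ac)
  then have "X * (of_int m + 1) * ((X + 1) * s (m - 1)) * ((X - 1) * s (m + 1))
      \<le> of_int m * (X - 1) * (X * s m)\<^sup>2"
    unfolding cs .
  then have "(X * (X - 1)) * ((X + 1) * (of_int m + 1) * s (m - 1) * s (m + 1))
      \<le> (X * (X - 1)) * (of_int m * X * (s m)\<^sup>2)"
    by (simp add: power2_eq_square algebra_simps)
  moreover have "X * (X - 1) > 0" using X by simp
  ultimately have "(X + 1) * (of_int m + 1) * s (m - 1) * s (m + 1) \<le> of_int m * X * (s m)\<^sup>2"
    by (rule mult_left_le_imp_le)
  then show ?thesis by (simp add: newton_ineq_def s_def X_def N_def)
qed

theorem esym_newton: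
  assumes "finite A"
  shows "newton_ineq A lam m"
  using assms
proof (induction "card A" arbitrary: A lam m rule: less_induct)
  case (less A lam m)
  have IH: "newton_ineq {..<card A - 1} mu m'" if "A \<noteq> {}" for mu m'
  proof -
    have "card {..<card A - 1} < card A" using that less.prems by (simp add: card_gt_0_iff)
    then show ?thesis using less.hyps by blast
  qed
  consider "m \<le> 0" | "int (card A) \<le> m" | "1 \<le> m" "m \<le> int (card A) - 2"
    | "m = int (card A) - 1" "3 \<le> card A" | "m = 1" "card A = 2"
    by linarith
  then show ?case
  proof cases
    case 1
    then show ?thesis by (rule newton_ineq_nonpos)
  next
    case 2
    then show ?thesis by (rule newton_ineq_above_card[OF less.prems])
  next
    case 3
    then have "A \<noteq> {}" by auto
    then show ?thesis by (rule newton_ineq_pderiv[OF less.prems 3 IH])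
  next
    case 4
    then have "A \<noteq> {}" by auto
    show ?thesis
    proof (cases "\<exists>x\<in>A. lam x = 0")
      case True
      with 4 less.prems show ?thesis using newton_ineq_zero_entry by blast
    next
      case False
      then have "\<forall>i\<in>A. lam i \<noteq> 0" by blast
      \<comment> \<open>inverting the entries exchanges the indices 1 and card A - 1\<close>
      moreover have "newton_ineq A (\<lambda>i. 1 / lam i) 1"
        using 4 by (intro newton_ineq_pderiv[OF less.prems _ _ IH[OF \<open>A \<noteq> {}\<close>]]) auto
      ultimately have "newton_ineq A lam (int (card A) - 1)"
        by (rule newton_ineq_inverse[OF less.prems])
      with 4 show ?thesis by simp
    qed
  next
    case 5
    then show ?thesis by (simp add: newton_ineq_card_2)
  qed
qed

lemma esym_mult_le_sq:
  assumes "finite A"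
  shows "esym (m - 1) A lam * esym (m + 1) A lam \<le> (esym m A lam)\<^sup>2"
proof (cases "1 \<le> m \<and> m + 1 \<le> int (card A)")
  case False
  then have "esym (m - 1) A lam * esym (m + 1) A lam = 0"
    using assms by (auto simp: esym_negative esym_above_card)
  then show ?thesis using zero_le_power2[of "esym m A lam"] by linarith
next
  case True
  define p where "p = esym (m - 1) A lam * esym (m + 1) A lam"
  define a where "a = of_int m * (real (card A) - of_int m)"
  define b where "b = (real (card A) - of_int m + 1) * (of_int m + 1)"
  have "b * p \<le> a * (esym m A lam)\<^sup>2"
    using esym_newton[OF assms, of lam m] by (simp add: newton_ineq_def a_def b_def p_def mult_ac)
  moreover have "0 < a" "a \<le> b" using True by (simp_all add: a_def b_def algebra_simps)
  ultimately have "p \<le> 0 \<or> a * p \<le> a * (esym m A lam)\<^sup>2"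
    using mult_right_mono[of a b p] by fastforce
  moreover have "0 \<le> (esym m A lam)\<^sup>2" by simp
  ultimately have "p \<le> (esym m A lam)\<^sup>2"
    using \<open>0 < a\<close> by (meson mult_le_cancel_left_pos order_trans)
  then show ?thesis by (simp add: p_def)
qed

definition gamma_cone :: "nat set \<Rightarrow> int \<Rightarrow> (nat \<Rightarrow> real) \<Rightarrow> bool" where
  "gamma_cone A k lam \<longleftrightarrow> (\<forall>m. 1 \<le> m \<longrightarrow> m \<le> k \<longrightarrow> 0 < esym m A lam)"

lemma Gamma_plus_iff: "lam \<in> Gamma_plus n k \<longleftrightarrow> gamma_cone {1..n} (int k) lam"
proof -
  have "(\<forall>j\<in>{1..k}. P (int j)) \<longleftrightarrow> (\<forall>m. 1 \<le> m \<longrightarrow> m \<le> int k \<longrightarrow> P m)" for P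
  proof (intro iffI allI impI)
    fix m assume "\<forall>j\<in>{1..k}. P (int j)" "1 \<le> m" "m \<le> int k"
    moreover from this have "nat m \<in> {1..k}" "int (nat m) = m" by auto
    ultimately show "P m" by metis
  qed simp
  then show ?thesis by (simp add: Gamma_plus_def gamma_cone_def sigma_def)
qed

lemma gamma_cone_mono: "gamma_cone A k lam \<Longrightarrow> k' \<le> k \<Longrightarrow> gamma_cone A k' lam"
  by (simp add: gamma_cone_def)

lemma gamma_cone_esym_pos:
  assumes "finite A" "gamma_cone A k lam" "0 \<le> m" "m \<le> k"
  shows "0 < esym m A lam"
  using assms by (cases "m = 0") (simp_all add: esym_0 gamma_cone_def)

lemma gamma_cone_esym_nonneg:
  assumes "finite A" "gamma_cone A k lam" "m \<le> k"
  shows "0 \<le> esym m A lam"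
  using gamma_cone_esym_pos[OF assms(1,2) _ assms(3)] by (cases "m < 0") (simp_all add: esym_negative less_imp_le)

lemma pos_of_shifted_pos:
  fixes a b c x :: real
  assumes "0 < a" "0 < b + x * a" "0 < c + x * b" "a * c \<le> b\<^sup>2"
  shows "0 < b"
proof (rule ccontr)
  assume "\<not> 0 < b"
  then have "(- b) * (- b) \<le> (x * a) * (- b)"
    using assms(2) by (intro mult_right_mono) simp_all
  also have "\<dots> = a * (x * (- b))" by simp
  also have "\<dots> < a * c" using assms(1,3) by (intro mult_strict_left_mono) simp_all
  finally show False using assms(4) by (simp add: power2_eq_square)
qed

lemma gamma_cone_remove:
  assumes "finite A" "x \<in> A" "gamma_cone A k lam"
  shows "gamma_cone (A - {x}) (k - 1) lam"
proof -
  let ?e = "\<lambda>j. esym j (A - {x}) lam"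
  have s: "esym j A lam = ?e j + lam x * ?e (j - 1)" for j
    by (rule esym_remove[OF assms(1,2)])
  have "j \<le> k - 1 \<longrightarrow> 0 < ?e j" if "0 \<le> j" for j
    using that
  proof (induction j rule: int_ge_induct)
    case base
    then show ?case using assms(1) by (simp add: esym_0)
  next
    case (step j)
    show ?case
    proof
      assume j: "j + 1 \<le> k - 1"
      show "0 < ?e (j + 1)"
      proof (rule pos_of_shifted_pos)
        show "0 < ?e j" using step j by simp
        have "0 < esym (j + 1) A lam" "0 < esym (j + 2) A lam"
          using assms(3) step j by (simp_all add: gamma_cone_def)
        then show "0 < ?e (j + 1) + lam x * ?e j" "0 < ?e (j + 2) + lam x * ?e (j + 1)"
          unfolding s by (simp_all add: add.commute)
        show "?e j * ?e (j + 2) \<le> (?e (j + 1))\<^sup>2"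
          using esym_mult_le_sq[of "A - {x}" "j + 1" lam] assms(1) by (simp add: add.assoc)
      qed
    qed
  qed
  then show ?thesis by (simp add: gamma_cone_def)
qed

lemma esym_newton_maclaurin:
  assumes "finite A" "gamma_cone A (j - 1) lam" "i \<le> j"
  shows "esym j A lam * esym (i - 1) A lam * (real (card A) - of_int i + 1) * of_int j
       \<le> esym i A lam * esym (j - 1) A lam * of_int i * (real (card A) - of_int j + 1)"
proof (cases "1 \<le> i")
  case False
  then show ?thesis by (cases "i = 0") (simp_all add: esym_negative)
next
  case True
  define N where "N = real (card A)"
  define e where "e m = esym m A lam" for m
  show ?thesis
    using assms(3,2) unfolding N_def[symmetric] e_def[symmetric]
  proof (induction j rule: int_ge_induct)
    case (step j)
    have cone: "gamma_cone A j lam" using step.prems by simp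
    have IH: "e j * e (i - 1) * (N - of_int i + 1) * of_int j
        \<le> e i * e (j - 1) * of_int i * (N - of_int j + 1)"
      using step.IH gamma_cone_mono[OF cone] by simp
    have pos: "0 < e j" "0 < e (j - 1)"
      using gamma_cone_esym_pos[OF assms(1) cone] step.hyps True by (simp_all add: e_def)
    have "0 \<le> e (i - 1)"
      using gamma_cone_esym_nonneg[OF assms(1) cone] step.hyps by (simp add: e_def)
    have "of_int j \<le> N"
      using pos(1) esym_above_card[OF assms(1), of j lam] by (force simp: e_def N_def)
    have newton: "(N - of_int j + 1) * (of_int j + 1) * e (j - 1) * e (j + 1)
        \<le> of_int j * (N - of_int j) * (e j)\<^sup>2"
      using esym_newton[OF assms(1), of lam j] by (simp add: newton_ineq_def N_def e_def)
    define c where "c = (N - of_int j + 1) * e (j - 1) * of_int j"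
    have "0 < c" using pos \<open>of_int j \<le> N\<close> step.hyps True by (simp add: c_def)
    have "c * (e (j + 1) * e (i - 1) * (N - of_int i + 1) * (of_int j + 1))
        = (e (i - 1) * (N - of_int i + 1) * of_int j) * ((N - of_int j + 1) * (of_int j + 1) * e (j - 1) * e (j + 1))"
      by (simp add: c_def algebra_simps)
    also have "\<dots> \<le> (e (i - 1) * (N - of_int i + 1) * of_int j) * (of_int j * (N - of_int j) * (e j)\<^sup>2)"
      using newton \<open>0 \<le> e (i - 1)\<close> \<open>of_int j \<le> N\<close> step.hyps True
      by (intro mult_left_mono) simp_all
    also have "\<dots> = (of_int j * (N - of_int j) * e j) * (e j * e (i - 1) * (N - of_int i + 1) * of_int j)"
      by (simp add: power2_eq_square algebra_simps)
    also have "\<dots> \<le> (of_int j * (N - of_int j) * e j) * (e i * e (j - 1) * of_int i * (N - of_int j + 1))"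
      using IH pos \<open>of_int j \<le> N\<close> step.hyps True by (intro mult_left_mono) simp_all
    also have "\<dots> = c * (e i * e (j + 1 - 1) * of_int i * (N - of_int (j + 1) + 1))"
      by (simp add: c_def algebra_simps)
    finally show ?case
      using \<open>0 < c\<close> by (simp add: mult_le_cancel_left_pos)
  qed (simp add: algebra_simps)
qed

lemma esym_ratio_mono:
  assumes "finite A" "gamma_cone A (j - 1) lam" "i \<le> j"
  shows "esym j A lam * esym (i - 1) A lam \<le> esym i A lam * esym (j - 1) A lam"
proof -
  consider "i \<le> 0" | "i = j" | "1 \<le> i" "i < j" using assms(3) by linarith
  then show ?thesis
  proof cases
    case 1
    moreover have "0 \<le> esym (j - 1) A lam" by (rule gamma_cone_esym_nonneg[OF assms(1,2)]) simp
    ultimately show ?thesis using assms(1) by (cases "i = 0") (simp_all add: esym_negative esym_0)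
  next
    case 3
    define N where "N = real (card A)"
    define R where "R = esym i A lam * esym (j - 1) A lam"
    have "0 \<le> R" unfolding R_def using 3 gamma_cone_esym_nonneg[OF assms(1,2)] by simp
    have "0 < esym (j - 1) A lam" using 3 gamma_cone_esym_pos[OF assms(1,2)] by simp
    then have "of_int j \<le> N + 1"
      using esym_above_card[OF assms(1), of "j - 1" lam] by (force simp: N_def)
    define \<alpha> \<beta> where "\<alpha> = (N - of_int i + 1) * of_int j" and "\<beta> = of_int i * (N - of_int j + 1)"
    have "0 < N - of_int i + 1" "0 < (of_int j :: real)" using 3 \<open>of_int j \<le> N + 1\<close> by simp_all
    then have "0 < \<alpha>" by (simp add: \<alpha>_def)
    have "of_int i * (N + 1) \<le> of_int j * (N + 1)"
      using 3 by (intro mult_right_mono) (simp_all add: N_def)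
    then have "\<beta> \<le> \<alpha>" by (simp add: \<alpha>_def \<beta>_def algebra_simps)
    have "\<alpha> * (esym j A lam * esym (i - 1) A lam) \<le> R * \<beta>"
      using esym_newton_maclaurin[OF assms] by (simp add: \<alpha>_def \<beta>_def R_def N_def mult_ac)
    also have "\<dots> \<le> \<alpha> * R" using \<open>0 \<le> R\<close> \<open>\<beta> \<le> \<alpha>\<close> by (simp add: mult_left_mono mult.commute)
    finally show ?thesis using \<open>0 < \<alpha>\<close> by (simp add: R_def)
  qed (simp add: mult.commute)
qed

definition Fii_core :: "nat set \<Rightarrow> int \<Rightarrow> int \<Rightarrow> (nat \<Rightarrow> real) \<Rightarrow> nat \<Rightarrow> real" where
  "Fii_core A k l lam i =
     esym l A lam * esym (k - 1) (A - {i}) lam - esym k A lam * esym (l - 1) (A - {i}) lam"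

lemma Fii_eq_Fstar_mult: "Fii n k l lam i = Fstar n k l lam * Fii_core {1..n} (int k) (int l) lam i"
  unfolding Fii_def Fii_core_def sigma_def sigma_del_def ..

lemma Fstar_nonneg: "0 \<le> Fstar n k l lam"
  unfolding Fstar_def by (intro mult_nonneg_nonneg) simp_all

lemma Fii_core_diff:
  assumes "finite A" "i \<in> A" "j \<in> A" "i \<noteq> j"
  shows "Fii_core A k l lam i - Fii_core A k l lam j
       = (lam j - lam i) * (esym l A lam * esym (k - 2) (A - {i, j}) lam
                            - esym k A lam * esym (l - 2) (A - {i, j}) lam)"
proof -
  let ?b = "\<lambda>m. esym m (A - {i, j}) lam"
  have "A - {i} - {j} = A - {i, j}" "A - {j} - {i} = A - {i, j}" by auto
  then have "esym m (A - {i}) lam = ?b m + lam j * ?b (m - 1)"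
    "esym m (A - {j}) lam = ?b m + lam i * ?b (m - 1)" for m
    using esym_remove[of "A - {i}" j m lam] esym_remove[of "A - {j}" i m lam] assms by simp_all
  then show ?thesis by (simp add: Fii_core_def algebra_simps)
qed

lemma esym_cross_nonneg:
  assumes "finite A" "i \<in> A" "j \<in> A" "i \<noteq> j" "gamma_cone A k lam" "0 \<le> l" "l < k"
  shows "0 \<le> esym l A lam * esym (k - 2) (A - {i, j}) lam - esym k A lam * esym (l - 2) (A - {i, j}) lam"
proof -
  define C where "C = A - {i}"
  define c b where "c m = esym m C lam" and "b m = esym m (A - {i, j}) lam" for m
  have fin: "finite C" "finite (A - {i, j})" using assms(1) by (simp_all add: C_def)
  have B: "A - {i, j} = C - {j}" "j \<in> C" using assms(3,4) by (auto simp: C_def)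
  have s: "esym m A lam = c m + lam i * c (m - 1)" for m
    unfolding c_def C_def by (rule esym_remove[OF assms(1,2)])
  have cb: "c m = b m + lam j * b (m - 1)" for m
    unfolding c_def b_def B(1) by (rule esym_remove[OF fin(1) B(2)])
  have coneC: "gamma_cone C (k - 1) lam"
    unfolding C_def by (rule gamma_cone_remove[OF assms(1,2,5)])
  have coneB: "gamma_cone (A - {i, j}) (k - 1 - 1) lam"
    unfolding B(1) by (rule gamma_cone_remove[OF fin(1) B(2) coneC])
  have "0 < c (k - 1)" "0 \<le> b (k - 2)"
    using gamma_cone_esym_pos[OF fin(1) coneC] gamma_cone_esym_nonneg[OF fin(2) coneB] assms(6,7)
    by (simp_all add: c_def b_def)
  have "0 < esym k A lam" using assms(5-7) by (simp add: gamma_cone_def)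
  \<comment> \<open>this lower bound on lam i is what controls the term linear in lam i\<close>
  then have "- c k \<le> lam i * c (k - 1)" unfolding s by simp
  have "c k * c (l - 1) \<le> c l * c (k - 1)"
    unfolding c_def using esym_ratio_mono[OF fin(1) coneC] assms(7) by simp
  have "b (k - 1) * b (l - 1 - 1) \<le> b (l - 1) * b (k - 1 - 1)"
    unfolding b_def using esym_ratio_mono[OF fin(2) coneB, of "l - 1"] assms(7) by simp
  then have U: "0 \<le> c (l - 1) * b (k - 2) - c (k - 1) * b (l - 2)"
    unfolding cb by (simp add: algebra_simps)
  define T where "T = c l * b (k - 2) - c k * b (l - 2)"
  have "0 \<le> b (k - 2) * (c l * c (k - 1) - c k * c (l - 1))"
    using \<open>0 \<le> b (k - 2)\<close> \<open>c k * c (l - 1) \<le> c l * c (k - 1)\<close> by simp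
  also have "\<dots> = c (k - 1) * T + (- c k) * (c (l - 1) * b (k - 2) - c (k - 1) * b (l - 2))"
    by (simp add: T_def algebra_simps)
  also have "\<dots> \<le> c (k - 1) * T + (lam i * c (k - 1)) * (c (l - 1) * b (k - 2) - c (k - 1) * b (l - 2))"
    by (rule add_left_mono[OF mult_right_mono[OF \<open>- c k \<le> lam i * c (k - 1)\<close> U]])
  also have "\<dots> = c (k - 1) * (esym l A lam * b (k - 2) - esym k A lam * b (l - 2))"
    unfolding s T_def by (simp add: algebra_simps)
  finally show ?thesis
    using \<open>0 < c (k - 1)\<close> by (simp add: b_def zero_le_mult_iff)
qed

lemma Fii_core_antimono:
  assumes "finite A" "i \<in> A" "j \<in> A" "gamma_cone A k lam" "0 \<le> l" "l < k" "lam i \<le> lam j"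
  shows "Fii_core A k l lam j \<le> Fii_core A k l lam i"
proof (cases "i = j")
  case False
  have "0 \<le> (lam j - lam i) * (esym l A lam * esym (k - 2) (A - {i, j}) lam
                                 - esym k A lam * esym (l - 2) (A - {i, j}) lam)"
    using assms(7) esym_cross_nonneg[OF assms(1-3) False assms(4-6)] by simp
  then show ?thesis using Fii_core_diff[OF assms(1-3) False, of k l lam] by linarith
qed simp

text \<open>The sequence e is meant to be esym of N - 1 variables: the factor N - i in the
  Newton-Maclaurin bound is (N - 1) - i + 1.\<close>

locale newton_maclaurin_sequence =
  fixes e :: "int \<Rightarrow> real" and N :: real and k :: int
  assumes newton: "i \<le> j \<Longrightarrow> j \<le> k \<Longrightarrow>
      e j * e (i - 1) * (N - of_int i) * of_int j \<le> e i * e (j - 1) * of_int i * (N - of_int j)"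
    and nonneg: "m < k \<Longrightarrow> 0 \<le> e m"
    and vanish: "m < 0 \<Longrightarrow> e m = 0"
begin

lemma quadratic_coeff_nonneg:
  assumes "0 \<le> l" "l < k" "of_int k \<le> N"
  shows "0 \<le> (N - of_int k + 1) * e (l - 1) * e (k - 2) - (N - of_int l + 1) * e (k - 1) * e (l - 2)"
proof (cases "k = 1")
  case True
  with assms show ?thesis by (simp add: vanish)
next
  case False
  define P where "P = e (l - 1) * e (k - 2)"
  have "0 \<le> P" using assms nonneg by (simp add: P_def)
  have G: "e (k - 1) * e (l - 2) * (N - of_int l + 1) * (of_int k - 1)
      \<le> P * (of_int l - 1) * (N - of_int k + 1)"
    using newton[of "l - 1" "k - 1"] assms by (simp add: P_def algebra_simps)
  have "0 \<le> (of_int k - of_int l) * (N - of_int k + 1) * P"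
    using \<open>0 \<le> P\<close> assms by simp
  then have "0 \<le> (of_int k - 1) * ((N - of_int k + 1) * P - (N - of_int l + 1) * e (k - 1) * e (l - 2))"
    using G by (simp add: algebra_simps)
  moreover have "0 < (of_int k - 1 :: real)" using False assms by simp
  ultimately show ?thesis by (simp add: P_def zero_le_mult_iff mult_ac)
qed

lemma linear_coeff_nonneg:
  assumes "0 \<le> l" "l < k" "of_int k \<le> N"
  shows "0 \<le> (N - of_int k + 1) * e l * e (k - 2) - (N - of_int l + 1) * e k * e (l - 2)
            - (of_int k - of_int l) * e (l - 1) * e (k - 1)"
proof (cases "l = 0")
  case True
  with assms nonneg show ?thesis by (simp add: vanish)
next
  case False
  define P where "P = e (l - 1) * e (k - 1)"
  have "0 \<le> P" using assms nonneg by (simp add: P_def)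
  have G1: "of_int k * (P * (N - of_int l) * (of_int k - 1))
      \<le> of_int k * (e l * e (k - 2) * of_int l * (N - of_int k + 1))"
    using newton[of l "k - 1"] assms by (intro mult_left_mono) (simp_all add: P_def algebra_simps)
  have G2: "of_int l * (e k * e (l - 2) * (N - of_int l + 1) * of_int k)
      \<le> of_int l * (P * (of_int l - 1) * (N - of_int k))"
    using newton[of "l - 1" k] assms by (intro mult_left_mono) (simp_all add: P_def algebra_simps)
  define X where "X = (N - of_int k + 1) * e l * e (k - 2) - (N - of_int l + 1) * e k * e (l - 2)
      - (of_int k - of_int l) * P"
  have "0 \<le> P * ((N - of_int k) * ((of_int k - of_int l) * (of_int k + of_int l - 1))
      + of_int k * (of_int k - of_int l) * (of_int k - 1 - of_int l))"
    using \<open>0 \<le> P\<close> assms False by simp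
  also have "\<dots> = of_int k * (P * (N - of_int l) * (of_int k - 1))
      - of_int l * (P * (of_int l - 1) * (N - of_int k)) - of_int l * of_int k * (of_int k - of_int l) * P"
    by (simp add: algebra_simps)
  also have "\<dots> \<le> (of_int l * of_int k) * X"
    using G1 G2 by (simp add: X_def algebra_simps)
  finally have "0 \<le> (of_int l * of_int k) * X" .
  moreover have "0 < (of_int l * of_int k :: real)" using assms False by simp
  ultimately have "0 \<le> X" by (simp add: zero_le_mult_iff)
  then show ?thesis by (simp add: X_def P_def mult_ac)
qed

lemma constant_coeff_bound:
  assumes "0 \<le> l" "l < k" "of_int l + 2 \<le> N" "N + 1 \<le> (N - of_int k) * (N - of_int l)"
  shows "(2 + 1 / N) * (e l * e (k - 1) - e k * e (l - 1))
     \<le> (N - of_int k + 1) * e l * e (k - 1) - (N - of_int l + 1) * e k * e (l - 1)"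
proof -
  define c where "c = 1 / N"
  have c: "c * N = 1" "c \<le> 1" using assms(1,3) by (simp_all add: c_def)
  define Q where "Q = e l * e (k - 1)"
  have "0 \<le> Q" using assms nonneg by (simp add: Q_def)
  have G: "(N - of_int l - 1 - c) * (e k * e (l - 1) * (N - of_int l) * of_int k)
      \<le> (N - of_int l - 1 - c) * (Q * of_int l * (N - of_int k))"
    using newton[of l k] assms c by (intro mult_left_mono) (simp_all add: Q_def)
  define X where "X = (N - of_int k + 1) * e l * e (k - 1) - (N - of_int l + 1) * e k * e (l - 1)
      - (2 + c) * (e l * e (k - 1) - e k * e (l - 1))"
  have "0 \<le> Q * ((of_int k - of_int l) * ((N - of_int k) * (N - of_int l) - N - 1))"
    using \<open>0 \<le> Q\<close> assms by simp
  also have "\<dots> = Q * ((of_int k - of_int l) * ((N - of_int k) * (N - of_int l) - N - c * N))"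
    using c by simp
  also have "\<dots> = of_int k * (N - of_int l) * (N - of_int k - 1 - c) * Q
      - (N - of_int l - 1 - c) * (Q * of_int l * (N - of_int k))"
    by (simp add: algebra_simps)
  also have "\<dots> \<le> (of_int k * (N - of_int l)) * X"
    using G by (simp add: Q_def X_def algebra_simps)
  finally have "0 \<le> (of_int k * (N - of_int l)) * X" .
  moreover have "0 < of_int k * (N - of_int l)" using assms by simp
  ultimately have "0 \<le> X" by (simp add: zero_le_mult_iff)
  then show ?thesis by (simp add: X_def c_def)
qed

end

lemma sum_Fii_core:
  assumes "finite A"
  shows "(\<Sum>i\<in>A. Fii_core A k l lam i)
       = (real (card A) - of_int k + 1) * esym l A lam * esym (k - 1) A lam
         - (real (card A) - of_int l + 1) * esym k A lam * esym (l - 1) A lam"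
  using assms
  by (simp add: Fii_core_def sum_subtractf sum_distrib_left[symmetric] sum_esym_remove algebra_simps)

lemma Fii_core_remove:
  assumes "finite A" "x \<in> A"
  shows "Fii_core A k l lam x = esym l (A - {x}) lam * esym (k - 1) (A - {x}) lam
                               - esym k (A - {x}) lam * esym (l - 1) (A - {x}) lam"
  unfolding Fii_core_def esym_remove[OF assms, of l] esym_remove[OF assms, of k]
  by (simp add: algebra_simps)

lemma newton_maclaurin_sequence_remove:
  assumes "finite A" "x \<in> A" "gamma_cone A k lam"
  shows "newton_maclaurin_sequence (\<lambda>m. esym m (A - {x}) lam) (real (card A)) k"
proof -
  have fin: "finite (A - {x})" using assms(1) by simp
  have cone: "gamma_cone (A - {x}) (k - 1) lam" by (rule gamma_cone_remove[OF assms])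
  have "1 \<le> card A" using assms(1,2) by (auto simp: Suc_le_eq card_gt_0_iff)
  then have card: "real (card (A - {x})) = real (card A) - 1"
    using assms(1,2) by (simp add: of_nat_diff)
  show ?thesis
  proof
    fix i j :: int assume "i \<le> j" "j \<le> k"
    then show "esym j (A - {x}) lam * esym (i - 1) (A - {x}) lam * (real (card A) - of_int i) * of_int j
        \<le> esym i (A - {x}) lam * esym (j - 1) (A - {x}) lam * of_int i * (real (card A) - of_int j)"
      using esym_newton_maclaurin[OF fin gamma_cone_mono[OF cone]] card by simp
  next
    fix m :: int
    show "m < k \<Longrightarrow> 0 \<le> esym m (A - {x}) lam"
      using gamma_cone_esym_nonneg[OF fin cone] by simp
    show "m < 0 \<Longrightarrow> esym m (A - {x}) lam = 0" by (rule esym_negative)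
  qed
qed

lemma sum_Fii_core_ge:
  assumes "finite A" "x \<in> A" "0 \<le> lam x" "gamma_cone A k lam" "0 \<le> l" "l < k"
    and "int (card A) + 1 \<le> (int (card A) - k) * (int (card A) - l)"
  shows "(2 + 1 / real (card A)) * Fii_core A k l lam x \<le> (\<Sum>i\<in>A. Fii_core A k l lam i)"
proof -
  define N t where "N = real (card A)" and "t = lam x"
  define e where "e m = esym m (A - {x}) lam" for m
  interpret newton_maclaurin_sequence e N k
    unfolding e_def N_def by (rule newton_maclaurin_sequence_remove[OF assms(1,2,4)])
  have "0 < esym k A lam" using assms(4-6) by (simp add: gamma_cone_def)
  then have "k \<le> int (card A)"
    by (rule contrapos_pp) (simp add: esym_above_card[OF assms(1)])
  with assms(6,7) have "k + 1 \<le> int (card A)" by (cases "k = int (card A)") auto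
  have "real_of_int (int (card A) + 1) \<le> real_of_int ((int (card A) - k) * (int (card A) - l))"
    using assms(7) by (simp only: of_int_le_iff)
  then have N: "of_int k \<le> N" "of_int l + 2 \<le> N" "N + 1 \<le> (N - of_int k) * (N - of_int l)"
    using \<open>k + 1 \<le> int (card A)\<close> assms(6) by (simp_all add: N_def)
  have s: "esym m A lam = e m + t * e (m - 1)" for m
    unfolding e_def t_def by (rule esym_remove[OF assms(1,2)])
  have sum_eq: "(\<Sum>i\<in>A. Fii_core A k l lam i)
      = ((N - of_int k + 1) * e l * e (k - 1) - (N - of_int l + 1) * e k * e (l - 1))
        + t * ((N - of_int k + 1) * e l * e (k - 2) - (N - of_int l + 1) * e k * e (l - 2)
               - (of_int k - of_int l) * e (l - 1) * e (k - 1))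
        + t\<^sup>2 * ((N - of_int k + 1) * e (l - 1) * e (k - 2) - (N - of_int l + 1) * e (k - 1) * e (l - 2))"
    unfolding sum_Fii_core[OF assms(1)] s N_def[symmetric] by (simp add: power2_eq_square algebra_simps)
  have core_eq: "Fii_core A k l lam x = e l * e (k - 1) - e k * e (l - 1)"
    unfolding e_def by (rule Fii_core_remove[OF assms(1,2)])
  have "0 \<le> t * ((N - of_int k + 1) * e l * e (k - 2) - (N - of_int l + 1) * e k * e (l - 2)
               - (of_int k - of_int l) * e (l - 1) * e (k - 1))"
    using linear_coeff_nonneg[OF assms(5,6) N(1)] assms(3) by (simp add: t_def)
  moreover have "0 \<le> t\<^sup>2 * ((N - of_int k + 1) * e (l - 1) * e (k - 2)
                           - (N - of_int l + 1) * e (k - 1) * e (l - 2))"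
    using quadratic_coeff_nonneg[OF assms(5,6) N(1)] by simp
  ultimately show ?thesis
    using constant_coeff_bound[OF assms(5,6) N(2,3)] unfolding sum_eq core_eq N_def by linarith
qed

lemma nat_product_bound:
  fixes n p q :: nat
  assumes "p < q" "q \<le> n" "2 * (n + 1) < (p + 1) * (q + 1)"
  shows "n + 1 \<le> p * q"
proof (rule ccontr)
  assume "\<not> n + 1 \<le> p * q"
  have expand: "(p + 1) * (q + 1) = p * q + p + q + 1" by simp
  have "2 \<le> p"
  proof (rule ccontr)
    assume "\<not> 2 \<le> p"
    then have "(p + 1) * (q + 1) \<le> 2 * (n + 1)" using assms(2) by (intro mult_mono) auto
    with assms(3) show False by simp
  qed
  then have "2 * q \<le> p * q" by (rule mult_right_mono) simp
  moreover define r where "r = p * q"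
  ultimately show False
    using assms(1,2) assms(3)[unfolded expand] \<open>\<not> n + 1 \<le> p * q\<close>
    unfolding r_def[symmetric] by presburger
qed

lemma int_product_bound:
  fixes n k l :: nat
  assumes "l < k" "k \<le> n" "2 * real (n + 1) < real (n - k + 1) * real (n - l + 1)"
  shows "int n + 1 \<le> (int n - int k) * (int n - int l)"
proof -
  have "real (2 * (n + 1)) < real ((n - k + 1) * (n - l + 1))"
    using assms(3) unfolding of_nat_mult by simp
  then have "2 * (n + 1) < (n - k + 1) * (n - l + 1)"
    by (simp only: of_nat_less_iff)
  then have "n + 1 \<le> (n - k) * (n - l)"
    using assms(1,2) by (intro nat_product_bound) auto
  moreover have "int ((n - k) * (n - l)) = (int n - int k) * (int n - int l)"
    using assms(1,2) by (simp add: of_nat_diff)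
  ultimately show ?thesis by linarith
qed

lemma Fii_antimono:
  assumes "l < k" "lam \<in> Gamma_plus n k" "i \<in> {1..n}" "j \<in> {1..n}" "lam i \<le> lam j"
  shows "Fii n k l lam j \<le> Fii n k l lam i"
proof -
  have "Fii_core {1..n} (int k) (int l) lam j \<le> Fii_core {1..n} (int k) (int l) lam i"
    using assms by (intro Fii_core_antimono) (simp_all add: Gamma_plus_iff)
  then show ?thesis
    unfolding Fii_eq_Fstar_mult by (rule mult_left_mono[OF _ Fstar_nonneg])
qed

lemma sum_Fii_ge:
  assumes "lam \<in> Gamma_plus n k" "l < k" "1 \<le> n" "0 \<le> lam 1"
    and "int n + 1 \<le> (int n - int k) * (int n - int l)"
  shows "(2 + 1 / real n) * Fii n k l lam 1 \<le> (\<Sum>i=1..n. Fii n k l lam i)"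
proof -
  have "(2 + 1 / real n) * Fii_core {1..n} (int k) (int l) lam 1
      \<le> (\<Sum>i=1..n. Fii_core {1..n} (int k) (int l) lam i)"
    using assms sum_Fii_core_ge[of "{1..n}" 1 lam "int k" "int l"] by (simp add: Gamma_plus_iff)
  then show ?thesis
    unfolding Fii_eq_Fstar_mult sum_distrib_left[symmetric] mult.left_commute[of _ "Fstar n k l lam"]
    by (rule mult_left_mono[OF _ Fstar_nonneg])
qed

theorem lemma5:
  fixes n k l :: nat
  assumes "l < k" and "k \<le> n"
  shows "(\<forall>lam \<in> Gamma_plus n k. \<forall>i\<in>{1..n}. \<forall>j\<in>{1..n}.
            lam i \<le> lam j \<longrightarrow> Fii n k l lam i \<ge> Fii n k l lam j)
       \<and> ((real (n - k + 1) * real (n - l + 1) > 2 * real (n + 1)) \<longrightarrow>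
            (\<exists>c > 0. \<forall>lam \<in> Gamma_plus n k. lam 1 > 0 \<longrightarrow>
               (\<Sum>i=1..n. Fii n k l lam i) \<ge> (2 + c) * Fii n k l lam 1))"
proof (intro conjI ballI impI)
  fix lam i j assume "lam \<in> Gamma_plus n k" "i \<in> {1..n}" "j \<in> {1..n}" "lam i \<le> lam j"
  with assms(1) show "Fii n k l lam j \<le> Fii n k l lam i" by (rule Fii_antimono)
next
  assume "2 * real (n + 1) < real (n - k + 1) * real (n - l + 1)"
  with assms have bound: "int n + 1 \<le> (int n - int k) * (int n - int l)"
    by (rule int_product_bound)
  show "\<exists>c > 0. \<forall>lam \<in> Gamma_plus n k. lam 1 > 0 \<longrightarrow>
      (\<Sum>i=1..n. Fii n k l lam i) \<ge> (2 + c) * Fii n k l lam 1"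
  proof (intro exI[of _ "1 / real n"] conjI ballI impI)
    show "0 < 1 / real n" using assms by simp
    fix lam assume "lam \<in> Gamma_plus n k" "0 < lam 1"
    with assms bound show "(2 + 1 / real n) * Fii n k l lam 1 \<le> (\<Sum>i=1..n. Fii n k l lam i)"
      by (intro sum_Fii_ge) auto
  qed
qed

end
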